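(* Let $\Pi$ be a program (possibly containing default negation $\neg$ and arbitrarily nested explicit negation $\sim$) and let $T$ be a consistent set of explicit literals. Then $T$ is an answer set of $\Pi$ if and only if $\langle T,T\rangle$ is an equilibrium model of $\Pi$ (viewing $\Pi$ as a theory of the logic ${\cal X}_5$).
   Context: Fix a set $\mathit{At}$ of atoms. An explicit literal is an atom $p$ or its explicit negation $\sim p$; a set of explicit literals is consistent if it does not contain both $p$ and $\sim p$ for any $p$. Nested expressions: $F ::= \top \mid \bot \mid p \mid F\vee F \mid F\wedge F \mid \neg F \mid \sim F$ ($p\in\mathit{At}$). A rule is $F\to G$ with $F,G$ nested expressions; a program is a set of rules; a program is explicit if it contains no $\neg$. Classical satisfaction/falsification of a nested expression by a consistent set $T$ of explicit literals: $T\models\top$, $T\not\models\bot$, $T\models p$ iff $p\in T$, $T\models\varphi\wedge\psi$ iff both, $T\models\varphi\vee\psi$ iff at least one, $T\models\sim\varphi$ iff $T=\!\!|\;\varphi$, $T\models\neg\varphi$ iff $T\not\models\varphi$; $T$ does not falsify $\top$, $T=\!\!|\;\bot$, $T=\!\!|\;p$ iff $\sim p\in T$, $T=\!\!|\;\varphi\wedge\psi$ iff $T$ falsifies at least one, $T=\!\!|\;\varphi\vee\psi$ iff $T$ falsifies both, $T=\!\!|\;\sim\varphi$ iff $T\models\varphi$, $T=\!\!|\;\neg\varphi$ iff $T\models\varphi$. $T$ is a model of a program if for every rule $F\to G$, $T\models F$ implies $T\models G$. Reduct of a nested expression w.r.t. $T$: $\top^T=\top$, $\bot^T=\bot$, $p^T=p$,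 $(F\wedge G)^T=F^T\wedge G^T$, $(F\vee G)^T=F^T\vee G^T$, $(\sim F)^T=\sim(F^T)$, $(\neg F)^T=\bot$ if $T\models F$ and $\top$ otherwise. $\Pi^T=\{F^T\to G^T \mid (F\to G)\in\Pi\}$. $T$ is an answer set of $\Pi$ if $T$ is a model of $\Pi^T$ and no consistent set $H\subsetneq T$ is a model of $\Pi^T$. Logic ${\cal X}_5$: formulas $\varphi ::= p\mid\bot\mid\varphi\wedge\varphi\mid\varphi\vee\varphi\mid\varphi\to\varphi\mid\sim\varphi$, with abbreviations $\neg\varphi:=\varphi\to\bot$, $\top:=\neg\bot$ (so nested expressions and rules are formulas, a program is a theory). An ${\cal X}_5$-interpretation is a pair $\langle H,T\rangle$ of consistent sets of explicit literals with $H\subseteq T$. Satisfaction $\models$ and falsification $=\!\!|\;$ are defined jointly: $\langle H,T\rangle\not\models\bot$, $\langle H,T\rangle=\!\!|\;\bot$; $\models p$ iff $p\in H$, $=\!\!|\;p$ iff $\sim p\in H$; $\models\varphi\wedge\psi$ iff both satisfied, $=\!\!|\;\varphi\wedge\psi$ iff at least one falsified; $\models\varphi\vee\psi$ iff at least one satisfied, $=\!\!|\;\varphi\vee\psi$ iff both falsified; $\models\sim\varphi$ iff $=\!\!|\;\varphi$, $=\!\!|\;\sim\varphi$ iff $\models\varphi$; $\langle H,T\rangle\models\varphi\to\psi$ iff (i) $\langle H,T\rangle\not\models\varphi$ or $\langle H,T\rangle\models\psi$, and (ii) $\langle T,T\rangle\not\models\varphi$ or $\langle T,T\rangle\models\psi$;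 $\langle H,T\rangle=\!\!|\;\varphi\to\psi$ iff $\langle T,T\rangle\models\varphi$ and $\langle H,T\rangle=\!\!|\;\psi$. $\langle H,T\rangle$ is a model of a theory $\Gamma$ if it satisfies every formula of $\Gamma$. A total interpretation $\langle T,T\rangle$ is an equilibrium model of $\Gamma$ if it is a model of $\Gamma$ and there is no model $\langle H,T\rangle$ of $\Gamma$ with $H\subsetneq T$. *)

theory Defs
  imports Main
begin

text \<open>Explicit literals over atoms of type 'a: an atom p (Pos p) or its explicit negation (Neg p).\<close>
datatype 'a lit = Pos 'a | Neg 'a

definition consistent :: "'a lit set \<Rightarrow> bool" where
  "consistent T \<longleftrightarrow> \<not> (\<exists>p. Pos p \<in> T \<and> Neg p \<in> T)"

datatype 'a nexp = NTop | NBot | NAtom 'a | NOr "'a nexp" "'a nexp" | NAnd "'a nexp" "'a nexp"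
  | NNot "'a nexp" | NSneg "'a nexp"

text \<open>A rule F \<rightarrow> G is a pair (F, G); a program is a set of rules.\<close>
type_synonym 'a rule = "'a nexp \<times> 'a nexp"
type_synonym 'a program = "'a rule set"

fun csat :: "'a lit set \<Rightarrow> 'a nexp \<Rightarrow> bool" and cfals :: "'a lit set \<Rightarrow> 'a nexp \<Rightarrow> bool" where
  "csat T NTop = True"
| "csat T NBot = False"
| "csat T (NAtom p) = (Pos p \<in> T)"
| "csat T (NAnd F G) = (csat T F \<and> csat T G)"
| "csat T (NOr F G) = (csat T F \<or> csat T G)"
| "csat T (NSneg F) = cfals T F"
| "csat T (NNot F) = (\<not> csat T F)"
| "cfals T NTop = False"
| "cfals T NBot = True"
| "cfals T (NAtom p) = (Neg p \<in> T)"
| "cfals T (NAnd F G) = (cfals T F \<or> cfals T G)"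
| "cfals T (NOr F G) = (cfals T F \<and> cfals T G)"
| "cfals T (NSneg F) = csat T F"
| "cfals T (NNot F) = csat T F"

definition cmodel :: "'a lit set \<Rightarrow> 'a program \<Rightarrow> bool" where
  "cmodel T \<Pi> \<longleftrightarrow> (\<forall>(F, G) \<in> \<Pi>. csat T F \<longrightarrow> csat T G)"

fun reduct :: "'a lit set \<Rightarrow> 'a nexp \<Rightarrow> 'a nexp" where
  "reduct T NTop = NTop"
| "reduct T NBot = NBot"
| "reduct T (NAtom p) = NAtom p"
| "reduct T (NAnd F G) = NAnd (reduct T F) (reduct T G)"
| "reduct T (NOr F G) = NOr (reduct T F) (reduct T G)"
| "reduct T (NSneg F) = NSneg (reduct T F)"
| "reduct T (NNot F) = (if csat T F then NBot else NTop)"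

definition preduct :: "'a program \<Rightarrow> 'a lit set \<Rightarrow> 'a program" where
  "preduct \<Pi> T = {(reduct T F, reduct T G) | F G. (F, G) \<in> \<Pi>}"

definition answer_set :: "'a program \<Rightarrow> 'a lit set \<Rightarrow> bool" where
  "answer_set \<Pi> T \<longleftrightarrow> cmodel T (preduct \<Pi> T) \<and>
     \<not> (\<exists>H. consistent H \<and> H \<subset> T \<and> cmodel H (preduct \<Pi> T))"

datatype 'a form = FAtom 'a | FBot | FAnd "'a form" "'a form" | FOr "'a form" "'a form"
  | FImp "'a form" "'a form" | FSneg "'a form"

definition FNeg :: "'a form \<Rightarrow> 'a form" where "FNeg \<phi> = FImp \<phi> FBot"
definition FTop :: "'a form" where "FTop = FNeg FBot"

fun nform :: "'a nexp \<Rightarrow> 'a form" where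
  "nform NTop = FTop"
| "nform NBot = FBot"
| "nform (NAtom p) = FAtom p"
| "nform (NAnd F G) = FAnd (nform F) (nform G)"
| "nform (NOr F G) = FOr (nform F) (nform G)"
| "nform (NSneg F) = FSneg (nform F)"
| "nform (NNot F) = FNeg (nform F)"

definition rform :: "'a rule \<Rightarrow> 'a form" where
  "rform r = FImp (nform (fst r)) (nform (snd r))"

definition theory_of :: "'a program \<Rightarrow> 'a form set" where
  "theory_of \<Pi> = rform ` \<Pi>"

fun xsat :: "'a lit set \<Rightarrow> 'a lit set \<Rightarrow> 'a form \<Rightarrow> bool"
and xfals :: "'a lit set \<Rightarrow> 'a lit set \<Rightarrow> 'a form \<Rightarrow> bool" where
  "xsat H T FBot = False"
| "xsat H T (FAtom p) = (Pos p \<in> H)"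
| "xsat H T (FAnd \<phi> \<psi>) = (xsat H T \<phi> \<and> xsat H T \<psi>)"
| "xsat H T (FOr \<phi> \<psi>) = (xsat H T \<phi> \<or> xsat H T \<psi>)"
| "xsat H T (FSneg \<phi>) = xfals H T \<phi>"
| "xsat H T (FImp \<phi> \<psi>) = ((\<not> xsat H T \<phi> \<or> xsat H T \<psi>) \<and> (\<not> xsat T T \<phi> \<or> xsat T T \<psi>))"
| "xfals H T FBot = True"
| "xfals H T (FAtom p) = (Neg p \<in> H)"
| "xfals H T (FAnd \<phi> \<psi>) = (xfals H T \<phi> \<or> xfals H T \<psi>)"
| "xfals H T (FOr \<phi> \<psi>) = (xfals H T \<phi> \<and> xfals H T \<psi>)"
| "xfals H T (FSneg \<phi>) = xsat H T \<phi>"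
| "xfals H T (FImp \<phi> \<psi>) = (xsat T T \<phi> \<and> xfals H T \<psi>)"

definition x5_interp :: "'a lit set \<Rightarrow> 'a lit set \<Rightarrow> bool" where
  "x5_interp H T \<longleftrightarrow> consistent H \<and> consistent T \<and> H \<subseteq> T"

definition x5_model :: "'a lit set \<Rightarrow> 'a lit set \<Rightarrow> 'a form set \<Rightarrow> bool" where
  "x5_model H T \<Gamma> \<longleftrightarrow> x5_interp H T \<and> (\<forall>\<phi>\<in>\<Gamma>. xsat H T \<phi>)"

definition equilibrium_model :: "'a lit set \<Rightarrow> 'a form set \<Rightarrow> bool" where
  "equilibrium_model T \<Gamma> \<longleftrightarrow> x5_model T T \<Gamma> \<and> \<not> (\<exists>H. H \<subset> T \<and> x5_model H T \<Gamma>)"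

end

theory Submission
  imports Defs
begin

text \<open>For \<open>H \<subseteq> T\<close>, the pair \<open>\<langle>H,T\<rangle>\<close> satisfies (falsifies) a nested expression exactly
when \<open>H\<close> classically satisfies (falsifies) its reduct with respect to \<open>T\<close>: by persistence,
\<open>\<not>F = F \<rightarrow> \<bottom>\<close> is decided at the world \<open>T\<close> alone, which is what the reduct does.
Consequently \<open>\<langle>H,T\<rangle>\<close> is a model of \<open>\<Pi>\<close> iff both \<open>H\<close> and \<open>T\<close> are classical models of the
reduct \<open>\<Pi>\<^sup>T\<close>, and minimality of \<open>\<langle>T,T\<rangle>\<close> among such pairs is minimality of \<open>T\<close> among models
of \<open>\<Pi>\<^sup>T\<close>.\<close>

lemma xsat_xfals_persistent:
  assumes "H \<subseteq> T"
  shows "(xsat H T \<phi> \<longrightarrow> xsat T T \<phi>) \<and> (xfals H T \<phi> \<longrightarrow> xfals T T \<phi>)"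
  using assms by (induction \<phi>) auto

lemma csat_cfals_reduct_self:
  "csat T (reduct T F) = csat T F \<and> cfals T (reduct T F) = cfals T F"
  by (induction F) auto

lemma xsat_xfals_nform_iff_reduct:
  assumes "H \<subseteq> T"
  shows "xsat H T (nform F) = csat H (reduct T F) \<and> xfals H T (nform F) = cfals H (reduct T F)"
  using assms
proof (induction F arbitrary: H)
  case (NNot F)
  have "xsat T T (nform F) = csat T F"
    using NNot.IH[of T] csat_cfals_reduct_self[of T F] by simp
  moreover have "xsat H T (nform F) \<longrightarrow> xsat T T (nform F)"
    using xsat_xfals_persistent[OF NNot.prems] by blast
  ultimately show ?case by (auto simp: FNeg_def)
qed (auto simp: FTop_def FNeg_def)

lemma xsat_rform_iff_reduct:
  assumes "H \<subseteq> T"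
  shows "xsat H T (rform (F, G)) \<longleftrightarrow>
    (csat H (reduct T F) \<longrightarrow> csat H (reduct T G)) \<and> (csat T (reduct T F) \<longrightarrow> csat T (reduct T G))"
  using xsat_xfals_nform_iff_reduct[OF assms] xsat_xfals_nform_iff_reduct[of T T]
  by (simp add: rform_def)

lemma xsat_theory_of_iff_cmodel_preduct:
  assumes "H \<subseteq> T"
  shows "(\<forall>\<phi>\<in>theory_of \<Pi>. xsat H T \<phi>) \<longleftrightarrow> cmodel H (preduct \<Pi> T) \<and> cmodel T (preduct \<Pi> T)"
  unfolding theory_of_def cmodel_def preduct_def
  using xsat_rform_iff_reduct[OF assms] by fastforce

lemma x5_model_theory_of_iff:
  "x5_model H T (theory_of \<Pi>) \<longleftrightarrow>
    x5_interp H T \<and> cmodel H (preduct \<Pi> T) \<and> cmodel T (preduct \<Pi> T)"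
  using xsat_theory_of_iff_cmodel_preduct unfolding x5_model_def x5_interp_def by blast

theorem theorem3:
  fixes \<Pi> :: "'a program" and T :: "'a lit set"
  assumes "consistent T"
  shows "answer_set \<Pi> T \<longleftrightarrow> equilibrium_model T (theory_of \<Pi>)"
  using assms
  unfolding answer_set_def equilibrium_model_def x5_model_theory_of_iff x5_interp_def
  by blast

end
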